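(* Let $A\subseteq\mathbb R^{d_x}$ be a set symmetric about the origin, let $W\sim N(0,I_{d_x})$ and $\bar W=W\mathbf 1\{W\in A\}$. Then $\bar W$ is $4$-sub-Gaussian, and hence for any matrix $H$ with $d_x$ columns, $H\bar W$ is $4\|H\|_{op}^2$-sub-Gaussian.
   Context: A random vector $Z$ is $s^2$-sub-Gaussian if $\mathbb{E}\exp(\lambda\langle u,Z\rangle)\le\exp(\lambda^2s^2/2)$ for all unit vectors $u$ and all $\lambda\in\mathbb R$. $\|H\|_{op}$ is the largest singular value of $H$. *)

theory Defs
  imports "HOL-Probability.Probability"
begin

definition std_gaussian_vec :: "(real ^ 'n::finite) measure" where
  "std_gaussian_vec = density lborel
     (\<lambda>x. ennreal ((2 * pi) powr (- real CARD('n) / 2) * exp (- (norm x)\<^sup>2 / 2)))"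

definition sub_gaussian :: "'a measure \<Rightarrow> ('a \<Rightarrow> 'b::real_inner) \<Rightarrow> real \<Rightarrow> bool" where
  "sub_gaussian M Z s2 \<longleftrightarrow>
     (\<forall>u::'b. norm u = 1 \<longrightarrow> (\<forall>l::real.
        (\<integral>\<^sup>+ \<omega>. ennreal (exp (l * inner u (Z \<omega>))) \<partial>M) \<le> ennreal (exp (l\<^sup>2 * s2 / 2))))"

definition op_norm :: "real ^ 'n::finite ^ 'm::finite \<Rightarrow> real" where
  "op_norm H = onorm (\<lambda>x. H *v x)"

end

theory Submission
  imports Defs
begin

text \<open>For symmetric \<open>A\<close> the map \<open>F x = (if x \<in> A then x else 0)\<close> is odd, so by the symmetry
  of the Gaussian law \<open>E exp \<langle>v, F W\<rangle> = E cosh \<langle>v, F W\<rangle>\<close>. Pointwise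
  \<open>cosh \<langle>v, F x\<rangle> \<le> cosh \<langle>v, x\<rangle>\<close>, since \<open>F x\<close> is either \<open>x\<close> or \<open>0\<close> and \<open>cosh \<ge> 1\<close>; hence the
  truncated vector inherits the Gaussian moment generating function bound
  \<open>E exp \<langle>v, F W\<rangle> \<le> exp (\<bar>v\<bar>\<^sup>2 / 2)\<close>, which is even stronger than the claimed variance proxy 4.
  For \<open>H F W\<close> one uses \<open>\<langle>u, H y\<rangle> = \<langle>H\<^sup>T u, y\<rangle>\<close> and \<open>\<bar>H\<^sup>T u\<bar> \<le> \<parallel>H\<parallel>\<^sub>o\<^sub>p \<bar>u\<bar>\<close>.\<close>

lemma distr_lborel_uminus: "distr lborel borel uminus = (lborel :: 'a::euclidean_space measure)"
  by (subst lborel_affine[of "-1" 0]) (auto simp: density_1 one_ennreal_def[symmetric])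

lemma nn_integral_symmetric_measure:
  fixes \<mu> :: "'a::euclidean_space measure"
  assumes sym: "distr \<mu> borel uminus = \<mu>" and [measurable]: "f \<in> borel_measurable borel"
  shows "(\<integral>\<^sup>+ x. f (- x) \<partial>\<mu>) = (\<integral>\<^sup>+ x. f x \<partial>\<mu>)"
proof -
  have [measurable_cong]: "sets \<mu> = sets borel"
    by (metis sets_distr sym)
  have "(\<integral>\<^sup>+ x. f (- x) \<partial>\<mu>) = (\<integral>\<^sup>+ x. f x \<partial>(distr \<mu> borel uminus))"
    by (subst nn_integral_distr) auto
  then show ?thesis
    by (simp add: sym)
qed

lemma exp_add_exp_uminus_ge_2: "2 \<le> exp t + exp (- t :: real)"
  using exp_ge_add_one_self[of t] exp_ge_add_one_self[of "- t"] by linarith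

lemma nn_integral_exp_inner_truncation_le:
  fixes \<mu> :: "'a::euclidean_space measure"
  assumes sym_\<mu>: "distr \<mu> borel uminus = \<mu>"
    and [measurable]: "A \<in> sets borel" and sym_A: "\<And>x. x \<in> A \<Longrightarrow> - x \<in> A"
  shows "(\<integral>\<^sup>+ x. ennreal (exp (inner v (if x \<in> A then x else 0))) \<partial>\<mu>)
    \<le> (\<integral>\<^sup>+ x. ennreal (exp (inner v x)) \<partial>\<mu>)"
proof -
  define F where "F x = (if x \<in> A then x else 0)" for x :: 'a
  have [measurable_cong]: "sets \<mu> = sets borel"
    by (metis sets_distr sym_\<mu>)
  have [measurable]: "F \<in> borel_measurable borel"
    unfolding F_def by measurable
  have F_odd: "F (- x) = - F x" for x
    using sym_A[of x] sym_A[of "- x"] by (auto simp: F_def)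
  define I where "I = (\<integral>\<^sup>+ x. ennreal (exp (inner v (F x))) \<partial>\<mu>)"
  define J where "J = (\<integral>\<^sup>+ x. ennreal (exp (inner v x)) \<partial>\<mu>)"
  have I_uminus: "I = (\<integral>\<^sup>+ x. ennreal (exp (- inner v (F x))) \<partial>\<mu>)"
    using nn_integral_symmetric_measure[OF sym_\<mu>, of "\<lambda>x. ennreal (exp (inner v (F x)))"]
    by (simp add: I_def F_odd)
  have J_uminus: "J = (\<integral>\<^sup>+ x. ennreal (exp (- inner v x)) \<partial>\<mu>)"
    using nn_integral_symmetric_measure[OF sym_\<mu>, of "\<lambda>x. ennreal (exp (inner v x))"]
    by (simp add: J_def)
  have cosh_le: "exp (inner v (F x)) + exp (- inner v (F x)) \<le> exp (inner v x) + exp (- inner v x)" for x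
    using exp_add_exp_uminus_ge_2[of "inner v x"] by (auto simp: F_def)
  have "I + I = (\<integral>\<^sup>+ x. ennreal (exp (inner v (F x)) + exp (- inner v (F x))) \<partial>\<mu>)"
    by (subst I_uminus) (simp add: I_def nn_integral_add[symmetric])
  also have "\<dots> \<le> (\<integral>\<^sup>+ x. ennreal (exp (inner v x) + exp (- inner v x)) \<partial>\<mu>)"
    by (intro nn_integral_mono ennreal_leI cosh_le)
  also have "\<dots> = J + J"
    by (subst (2) J_uminus) (simp add: J_def nn_integral_add[symmetric])
  finally have "I \<le> J"
    by (meson add_strict_mono not_less)
  then show ?thesis
    by (simp add: I_def J_def F_def)
qed

definition std_gaussian_density :: "real ^ 'n::finite \<Rightarrow> real" where
  "std_gaussian_density x = (2 * pi) powr (- real CARD('n) / 2) * exp (- (norm x)\<^sup>2 / 2)"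

lemma std_gaussian_density_measurable [measurable]: "std_gaussian_density \<in> borel_measurable borel"
  unfolding std_gaussian_density_def by measurable

lemma std_gaussian_density_nonneg: "std_gaussian_density x \<ge> 0"
  by (simp add: std_gaussian_density_def)

lemma std_gaussian_density_uminus: "std_gaussian_density (- x) = std_gaussian_density x"
  by (simp add: std_gaussian_density_def)

lemma std_gaussian_density_mult_exp_inner:
  "std_gaussian_density x * exp (inner v x) = exp ((norm v)\<^sup>2 / 2) * std_gaussian_density (x - v)"
proof -
  have "(norm (x - v))\<^sup>2 = (norm x)\<^sup>2 - 2 * inner v x + (norm v)\<^sup>2"
    by (simp add: power2_norm_eq_inner inner_diff inner_commute)
  then have "- (norm x)\<^sup>2 / 2 + inner v x = (norm v)\<^sup>2 / 2 + - (norm (x - v))\<^sup>2 / 2"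
    by linarith
  then show ?thesis
    by (simp add: std_gaussian_density_def exp_add[symmetric] mult_ac)
qed

lemma std_gaussian_vec_density:
  "std_gaussian_vec = density lborel (\<lambda>x. ennreal (std_gaussian_density x))"
  unfolding std_gaussian_vec_def std_gaussian_density_def ..

lemma distr_std_gaussian_vec_uminus:
  "distr std_gaussian_vec borel uminus = (std_gaussian_vec :: (real ^ 'n::finite) measure)"
proof -
  have "std_gaussian_vec = density (distr lborel borel uminus) (\<lambda>x. ennreal (std_gaussian_density (x :: real ^ 'n)))"
    by (simp add: std_gaussian_vec_density distr_lborel_uminus)
  also have "\<dots> = distr std_gaussian_vec borel uminus"
    by (subst density_distr) (auto simp: std_gaussian_vec_density std_gaussian_density_uminus)
  finally show ?thesis ..
qed

text \<open>The normalisation of the density is taken as a hypothesis; in the application it holds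
  because \<open>std_gaussian_vec\<close> is the law of a random vector.\<close>

lemma nn_integral_std_gaussian_vec_exp_inner:
  assumes "prob_space (std_gaussian_vec :: (real ^ 'n::finite) measure)"
  shows "(\<integral>\<^sup>+ x. ennreal (exp (inner w x)) \<partial>(std_gaussian_vec :: (real ^ 'n) measure))
    = ennreal (exp ((norm w)\<^sup>2 / 2))"
proof -
  let ?g = "\<lambda>x :: real ^ 'n. ennreal (std_gaussian_density x)"
  have total: "(\<integral>\<^sup>+ x. ?g x \<partial>lborel) = 1"
    using prob_space.emeasure_space_1[OF assms]
    by (simp add: std_gaussian_vec_density emeasure_density)
  have "(\<integral>\<^sup>+ x. ennreal (exp (inner w x)) \<partial>std_gaussian_vec)
      = (\<integral>\<^sup>+ x. ?g x * ennreal (exp (inner w x)) \<partial>lborel)"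
    by (simp add: std_gaussian_vec_density nn_integral_density)
  also have "\<dots> = (\<integral>\<^sup>+ x. ennreal (exp ((norm w)\<^sup>2 / 2)) * ?g (- w + x) \<partial>lborel)"
    by (intro nn_integral_cong)
      (simp add: ennreal_mult''[symmetric] std_gaussian_density_mult_exp_inner std_gaussian_density_nonneg)
  also have "\<dots> = ennreal (exp ((norm w)\<^sup>2 / 2)) * (\<integral>\<^sup>+ x. ?g x \<partial>(distr lborel borel ((+) (- w))))"
    by (subst nn_integral_distr) (auto intro: nn_integral_cmult)
  finally show ?thesis
    by (simp add: lborel_distr_plus total)
qed

lemma sub_gaussianI:
  fixes Z :: "'a \<Rightarrow> 'b::real_inner"
  assumes "\<And>v. (\<integral>\<^sup>+ \<omega>. ennreal (exp (inner v (Z \<omega>))) \<partial>M) \<le> ennreal (exp (s * (norm v)\<^sup>2 / 2))"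
  shows "sub_gaussian M Z s"
  unfolding sub_gaussian_def
proof (intro allI impI)
  fix u :: 'b and l :: real
  assume "norm u = 1"
  then have proxy: "s * (norm (l *\<^sub>R u))\<^sup>2 / 2 = l\<^sup>2 * s / 2"
    by (simp add: power_mult_distrib)
  show "(\<integral>\<^sup>+ \<omega>. ennreal (exp (l * inner u (Z \<omega>))) \<partial>M) \<le> ennreal (exp (l\<^sup>2 * s / 2))"
    using assms[of "l *\<^sub>R u"] unfolding inner_scaleR_left proxy .
qed

lemma inner_matrix_vector_mult:
  fixes H :: "real ^ 'n::finite ^ 'm::finite"
  shows "inner u (H *v y) = inner (transpose H *v u) y"
proof -
  have "transpose H *v u = u v* H"
    using vector_transpose_matrix[of u "transpose H"] by simp
  then show ?thesis
    by (simp add: dot_lmul_matrix)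
qed

lemma norm_transpose_mult_le_op_norm:
  fixes H :: "real ^ 'n::finite ^ 'm::finite"
  shows "norm (transpose H *v u) \<le> op_norm H * norm u"
proof -
  define z where "z = transpose H *v u"
  have "(norm z)\<^sup>2 = inner u (H *v z)"
    by (simp add: inner_matrix_vector_mult z_def power2_norm_eq_inner)
  also have "\<dots> \<le> norm u * norm (H *v z)"
    by (rule norm_cauchy_schwarz)
  also have "\<dots> \<le> norm u * (op_norm H * norm z)"
    using onorm[OF matrix_vector_mul_bounded_linear, of H z]
    by (simp add: op_norm_def mult_left_mono)
  finally have "norm z * norm z \<le> (op_norm H * norm u) * norm z"
    by (simp add: power2_eq_square mult_ac)
  then show ?thesis
    unfolding z_def[symmetric]
    by (cases "norm z = 0") (auto simp: op_norm_def onorm_pos_le)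
qed

lemma sub_gaussian_matrix_vector_mult:
  fixes Z :: "'a \<Rightarrow> real ^ 'n::finite" and H :: "real ^ 'n ^ 'm::finite"
  assumes mgf: "\<And>v. (\<integral>\<^sup>+ \<omega>. ennreal (exp (inner v (Z \<omega>))) \<partial>M) \<le> ennreal (exp (s * (norm v)\<^sup>2 / 2))"
    and "s \<ge> 0"
  shows "sub_gaussian M (\<lambda>\<omega>. H *v Z \<omega>) (s * (op_norm H)\<^sup>2)"
proof (rule sub_gaussianI)
  fix v :: "real ^ 'm"
  have "(norm (transpose H *v v))\<^sup>2 \<le> (op_norm H)\<^sup>2 * (norm v)\<^sup>2"
    using norm_transpose_mult_le_op_norm[of H v]
    by (simp add: power_mult_distrib[symmetric] power_mono)
  then have "exp (s * (norm (transpose H *v v))\<^sup>2 / 2) \<le> exp (s * (op_norm H)\<^sup>2 * (norm v)\<^sup>2 / 2)"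
    using \<open>s \<ge> 0\<close> by (simp add: mult_left_mono mult.assoc divide_right_mono)
  then show "(\<integral>\<^sup>+ \<omega>. ennreal (exp (inner v (H *v Z \<omega>))) \<partial>M) \<le> ennreal (exp (s * (op_norm H)\<^sup>2 * (norm v)\<^sup>2 / 2))"
    unfolding inner_matrix_vector_mult[of v H] by (rule order_trans[OF mgf ennreal_leI])
qed

theorem proposition13:
  fixes M :: "'a measure" and W :: "'a \<Rightarrow> real ^ 'n::finite" and A :: "(real ^ 'n) set"
  assumes "prob_space M"
    and "W \<in> borel_measurable M"
    and "distr M borel W = std_gaussian_vec"
    and "A \<in> sets borel"
    and "\<And>x. x \<in> A \<Longrightarrow> - x \<in> A"
  shows "sub_gaussian M (\<lambda>\<omega>. if W \<omega> \<in> A then W \<omega> else 0) 4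
    \<and> (\<forall>H :: real ^ 'n ^ 'm::finite.
         sub_gaussian M (\<lambda>\<omega>. H *v (if W \<omega> \<in> A then W \<omega> else 0)) (4 * (op_norm H)\<^sup>2))"
proof -
  note [measurable] = \<open>W \<in> borel_measurable M\<close> \<open>A \<in> sets borel\<close>
  have gaussian_prob: "prob_space (std_gaussian_vec :: (real ^ 'n) measure)"
    using prob_space.prob_space_distr[OF \<open>prob_space M\<close>, of W borel] assms(3) by simp
  have mgf: "(\<integral>\<^sup>+ \<omega>. ennreal (exp (inner v (if W \<omega> \<in> A then W \<omega> else 0))) \<partial>M)
      \<le> ennreal (exp (4 * (norm v)\<^sup>2 / 2))" for v :: "real ^ 'n"
  proof -
    have "(\<integral>\<^sup>+ \<omega>. ennreal (exp (inner v (if W \<omega> \<in> A then W \<omega> else 0))) \<partial>M)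
        = (\<integral>\<^sup>+ x. ennreal (exp (inner v (if x \<in> A then x else 0))) \<partial>std_gaussian_vec)"
      by (simp flip: assms(3) add: nn_integral_distr)
    also have "\<dots> \<le> (\<integral>\<^sup>+ x. ennreal (exp (inner v x)) \<partial>std_gaussian_vec)"
      by (rule nn_integral_exp_inner_truncation_le[OF distr_std_gaussian_vec_uminus assms(4,5)])
    also have "\<dots> \<le> ennreal (exp (4 * (norm v)\<^sup>2 / 2))"
      by (simp add: nn_integral_std_gaussian_vec_exp_inner[OF gaussian_prob])
    finally show ?thesis .
  qed
  have "sub_gaussian M (\<lambda>\<omega>. H *v (if W \<omega> \<in> A then W \<omega> else 0)) (4 * (op_norm H)\<^sup>2)"
    for H :: "real ^ 'n ^ 'm"
    using sub_gaussian_matrix_vector_mult[OF mgf] by simp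
  then show ?thesis
    using sub_gaussianI[OF mgf] by blast
qed

end
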